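(* Absorption fails on the strict face of the cube: (i) applicative order $SSS$ absorbs none of $ISI$, call-by-value $ISS$, head applicative order $SSI$, i.e. $SSS\circ st\neq SSS$ for each $st\in\{ISI,ISS,SSI\}$ (witness $(\lambda x.y)(\lambda k.k\,\Omega)$); (ii) $ISS\circ ISI\neq ISS$ (witness $(\lambda x.y)(x\,\Omega)$); (iii) $SSI\circ ISI\neq SSI$ (witness $(\lambda x.y)(\lambda x.\Omega)$). Here $\Omega=(\lambda x.xx)(\lambda x.xx)$.
   Context: Terms: $\Lambda ::= x\mid\lambda x.\Lambda\mid\Lambda\Lambda$; $[N/x]B$ is capture-avoiding substitution. An evaluator is a partial function $\Lambda\rightharpoonup\Lambda$ defined by inference rules, undefined (divergent) where no finite derivation exists; $\mathrm{id}$ is the identity; composition is undefined where the inner evaluator is. Eval-apply template: given evaluators $la,op_1,ar_1,op_2,ar_2$ (possibly $ea$ itself), $ea$ is defined by (var) $ea(x)=x$; (abs) $ea(\lambda x.B)=\lambda x.B'$ if $la(B)=B'$; (con) $ea(MN)=B'$ if $op_1(M)=\lambda x.B$, $ar_1(N)=N'$, $ea([N'/x]B)=B'$; (neu) $ea(MN)=M''N'$ if $op_1(M)=M'$, $M'$ not an abstraction, $op_2(M')=M''$, $ar_2(N)=N'$. Uniform evaluator $XYZ\in\{I,S\}^3$: $op_1=ea$, $op_2=\mathrm{id}$, and $la$, $ar_1$, $ar_2$ equal to $ea$ itself when the corresponding letter $X$, $Y$, $Z$ is $S$ and to $\mathrm{id}$ when it is $I$. A strategy $st_2$ absorbs $st_1$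 iff $st_2\circ st_1=st_2$. *)

theory Defs
  imports Main
begin

datatype dB = Var nat | Lam dB | App dB dB

primrec lift :: "dB \<Rightarrow> nat \<Rightarrow> dB" where
  "lift (Var i) k = (if i < k then Var i else Var (Suc i))"
| "lift (Lam s) k = Lam (lift s (Suc k))"
| "lift (App s t) k = App (lift s k) (lift t k)"

text \<open>subst t s k: substitute s for index k in t (capture-avoiding by construction).
  For an abstraction Lam B, the beta-substitution [N/x]B is subst B N 0.\<close>
primrec subst :: "dB \<Rightarrow> dB \<Rightarrow> nat \<Rightarrow> dB" where
  "subst (Var i) s k = (if k < i then Var (i - 1) else if i = k then s else Var i)"
| "subst (Lam t) s k = Lam (subst t (lift s 0) (Suc k))"
| "subst (App t u) s k = App (subst t s k) (subst u s k)"

fun is_abs :: "dB \<Rightarrow> bool" where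
  "is_abs (Lam _) = True"
| "is_abs _ = False"

datatype ltr = I | S

text \<open>Big-step relation of the uniform evaluator XYZ: op1 = ea, op2 = id,
  la = ea if X = S else id, ar1 = ea if Y = S else id, ar2 = ea if Z = S else id.\<close>
inductive ev :: "ltr \<Rightarrow> ltr \<Rightarrow> ltr \<Rightarrow> dB \<Rightarrow> dB \<Rightarrow> bool" for X Y Z where
  var: "ev X Y Z (Var n) (Var n)"
| absI: "X = I \<Longrightarrow> ev X Y Z (Lam B) (Lam B)"
| absS: "X = S \<Longrightarrow> ev X Y Z B B' \<Longrightarrow> ev X Y Z (Lam B) (Lam B')"
| conI: "Y = I \<Longrightarrow> ev X Y Z M (Lam B) \<Longrightarrow> ev X Y Z (subst B N 0) B'
          \<Longrightarrow> ev X Y Z (App M N) B'"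
| conS: "Y = S \<Longrightarrow> ev X Y Z M (Lam B) \<Longrightarrow> ev X Y Z N N' \<Longrightarrow> ev X Y Z (subst B N' 0) B'
          \<Longrightarrow> ev X Y Z (App M N) B'"
| neuI: "Z = I \<Longrightarrow> ev X Y Z M M' \<Longrightarrow> \<not> is_abs M' \<Longrightarrow> ev X Y Z (App M N) (App M' N)"
| neuS: "Z = S \<Longrightarrow> ev X Y Z M M' \<Longrightarrow> \<not> is_abs M' \<Longrightarrow> ev X Y Z N N'
          \<Longrightarrow> ev X Y Z (App M N) (App M' N')"

definition eval :: "ltr \<Rightarrow> ltr \<Rightarrow> ltr \<Rightarrow> dB \<Rightarrow> dB option" where
  "eval X Y Z t = (if \<exists>u. ev X Y Z t u then Some (THE u. ev X Y Z t u) else None)"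

definition omega :: dB where
  "omega = App (Lam (App (Var 0) (Var 0))) (Lam (App (Var 0) (Var 0)))"

text \<open>Free variables: y is de Bruijn index 0, x is de Bruijn index 1 (at top level).
  Hence \<lambda>x.y is Lam (Var 1).\<close>
definition const_y :: dB where "const_y = Lam (Var 1)"

definition w1 :: dB where   \<comment> \<open>(\<lambda>x.y)(\<lambda>k. k \<Omega>)\<close>
  "w1 = App const_y (Lam (App (Var 0) omega))"
definition w2 :: dB where   \<comment> \<open>(\<lambda>x.y)(x \<Omega>) with x free\<close>
  "w2 = App const_y (App (Var 1) omega)"
definition w3 :: dB where   \<comment> \<open>(\<lambda>x.y)(\<lambda>x.\<Omega>)\<close>
  "w3 = App const_y (Lam omega)"

end

theory Submission
  imports Defs
begin

text \<open>Each witness applies \<open>\<lambda>x. y\<close> to an argument in which \<open>\<Omega>\<close> sits under a binder or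
  in the argument of a neutral term. The first strategy does not look there, so it discards the
  argument and returns the normal form \<open>y\<close>, on which every evaluator is defined. The second one is
  strict in arguments and does enter the binder resp. the neutral argument, where it must evaluate
  \<open>\<Omega>\<close>, which has no finite derivation; hence it is undefined on the witness itself.\<close>

inductive_cases ev_VarE: "ev X Y Z (Var n) u"
inductive_cases ev_LamE[consumes 1]: "ev X Y Z (Lam B) u"
inductive_cases ev_AppE[consumes 1]: "ev X Y Z (App M N) u"

lemma ev_Var_iff: "ev X Y Z (Var n) u \<longleftrightarrow> u = Var n"
  by (auto elim: ev_VarE intro: ev.var)

lemma ev_Lam_is_abs: "ev X Y Z (Lam B) u \<Longrightarrow> is_abs u"
  by (erule ev_LamE) simp_all

lemma ev_deterministic: "ev X Y Z t u \<Longrightarrow> ev X Y Z t u' \<Longrightarrow> u = u'"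
proof (induction arbitrary: u' rule: ev.induct)
  case (var n)
  then show ?case by (blast elim: ev_VarE)
next
  case (absI B)
  from absI.prems \<open>X = I\<close> show ?case by (cases rule: ev_LamE) simp_all
next
  case (absS B B')
  from absS.prems \<open>X = S\<close> show ?case by (cases rule: ev_LamE) (simp_all add: absS.IH)
next
  case (conI M B N B')
  from conI.prems \<open>Y = I\<close> show ?case
    by (cases rule: ev_AppE; use conI.IH in force)
next
  case (conS M B N N' B')
  from conS.prems \<open>Y = S\<close> show ?case
    by (cases rule: ev_AppE; use conS.IH in force)
next
  case (neuI M M' N)
  from neuI.prems \<open>Z = I\<close> \<open>\<not> is_abs M'\<close> show ?case
    by (cases rule: ev_AppE; use neuI.IH in force)
next
  case (neuS M M' N N')
  from neuS.prems \<open>Z = S\<close> \<open>\<not> is_abs M'\<close> show ?case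
    by (cases rule: ev_AppE; use neuS.IH in force)
qed

lemma eval_eq_SomeI: "ev X Y Z t u \<Longrightarrow> eval X Y Z t = Some u"
  unfolding eval_def using ev_deterministic by (metis the_equality)

lemma eval_eq_NoneI: "(\<And>u. \<not> ev X Y Z t u) \<Longrightarrow> eval X Y Z t = None"
  unfolding eval_def by simp

lemma ev_Lam_body: "ev S Y Z (Lam B) u \<Longrightarrow> \<exists>v. ev S Y Z B v"
  by (erule ev_LamE) auto

lemma ev_App_Var_arg: "ev X Y S (App (Var n) N) u \<Longrightarrow> \<exists>v. ev X Y S N v"
  by (erule ev_AppE) (auto simp: ev_Var_iff)

lemma ev_App_Lam_arg: "ev X S Z (App (Lam B) N) u \<Longrightarrow> \<exists>v. ev X S Z N v"
  by (erule ev_AppE) (auto dest: ev_Lam_is_abs)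

lemma ev_self_app_Var: "ev X Y Z (App (Var 0) (Var 0)) u \<Longrightarrow> u = App (Var 0) (Var 0)"
  by (erule ev_AppE) (auto simp: ev_Var_iff)

lemma ev_Lam_self_app: "ev X Y Z (Lam (App (Var 0) (Var 0))) u \<Longrightarrow> u = Lam (App (Var 0) (Var 0))"
  by (erule ev_LamE) (auto dest: ev_self_app_Var)

text \<open>The operator \<open>\<lambda>x. x x\<close> of \<open>\<Omega>\<close> evaluates only to itself and contracting it
  gives \<open>\<Omega>\<close> back, so every derivation for \<open>\<Omega>\<close> has a proper subderivation for \<open>\<Omega>\<close>.\<close>
lemma ev_source_neq_omega: "ev X Y Z t u \<Longrightarrow> t \<noteq> omega"
  by (induction rule: ev.induct) (auto simp: omega_def dest!: ev_Lam_self_app)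

lemma not_ev_omega: "\<not> ev X Y Z omega u"
  using ev_source_neq_omega by blast

lemma ev_const_y: "ev X Y Z const_y const_y"
  unfolding const_y_def by (cases X) (auto intro: ev.intros)

lemma ev_const_y_App:
  assumes "ev X S Z N N'"
  shows "ev X S Z (App const_y N) (Var 0)"
  using ev.conS[OF refl ev_const_y[unfolded const_y_def] assms] by (simp add: const_y_def ev.var)

lemma eval_Var: "eval X Y Z (Var n) = Some (Var n)"
  by (rule eval_eq_SomeI) (rule ev.var)

lemma eval_SSS_w1: "eval S S S w1 = None"
  using not_ev_omega
  by (intro eval_eq_NoneI)
    (auto simp: w1_def const_y_def dest!: ev_App_Lam_arg ev_Lam_body ev_App_Var_arg)

lemma eval_ISS_w2: "eval I S S w2 = None"
  using not_ev_omega
  by (intro eval_eq_NoneI) (auto simp: w2_def const_y_def dest!: ev_App_Lam_arg ev_App_Var_arg)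

lemma eval_SSI_w3: "eval S S I w3 = None"
  using not_ev_omega
  by (intro eval_eq_NoneI) (auto simp: w3_def const_y_def dest!: ev_App_Lam_arg ev_Lam_body)

lemma eval_w1:
  "eval I S I w1 = Some (Var 0)" "eval I S S w1 = Some (Var 0)" "eval S S I w1 = Some (Var 0)"
  unfolding w1_def
  by (rule eval_eq_SomeI ev_const_y_App ev.absI ev.absS ev.neuI ev.var | simp)+

lemma eval_ISI_w2: "eval I S I w2 = Some (Var 0)"
  unfolding w2_def by (rule eval_eq_SomeI ev_const_y_App ev.neuI ev.var | simp)+

lemma eval_ISI_w3: "eval I S I w3 = Some (Var 0)"
  unfolding w3_def by (rule eval_eq_SomeI ev_const_y_App ev.absI | simp)+

theorem mainTheorem6:
  shows "((eval S S S \<circ>\<^sub>m eval I S I) w1 \<noteq> eval S S S w1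
          \<and> (eval S S S \<circ>\<^sub>m eval I S S) w1 \<noteq> eval S S S w1
          \<and> (eval S S S \<circ>\<^sub>m eval S S I) w1 \<noteq> eval S S S w1
          \<and> eval S S S \<circ>\<^sub>m eval I S I \<noteq> eval S S S
          \<and> eval S S S \<circ>\<^sub>m eval I S S \<noteq> eval S S S
          \<and> eval S S S \<circ>\<^sub>m eval S S I \<noteq> eval S S S)
       \<and> ((eval I S S \<circ>\<^sub>m eval I S I) w2 \<noteq> eval I S S w2
          \<and> eval I S S \<circ>\<^sub>m eval I S I \<noteq> eval I S S)
       \<and> ((eval S S I \<circ>\<^sub>m eval I S I) w3 \<noteq> eval S S I w3
          \<and> eval S S I \<circ>\<^sub>m eval I S I \<noteq> eval S S I)"
proof -
  have "(eval S S S \<circ>\<^sub>m eval I S I) w1 \<noteq> eval S S S w1"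
    "(eval S S S \<circ>\<^sub>m eval I S S) w1 \<noteq> eval S S S w1"
    "(eval S S S \<circ>\<^sub>m eval S S I) w1 \<noteq> eval S S S w1"
    "(eval I S S \<circ>\<^sub>m eval I S I) w2 \<noteq> eval I S S w2"
    "(eval S S I \<circ>\<^sub>m eval I S I) w3 \<noteq> eval S S I w3"
    by (simp_all add: eval_SSS_w1 eval_ISS_w2 eval_SSI_w3 eval_w1 eval_ISI_w2 eval_ISI_w3 eval_Var)
  then show ?thesis by metis
qed

end
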